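(* Let $n\ge3$ and let $I\subseteq(0,+\infty)$ be a bounded interval. Then for every $V\in H^1(I)$, $$\sup_{s\in I}s^{\frac n2-1}|V(s)|\le C\Big[\Big(\int_I s^{n-1}|V'(s)|^2ds\Big)^{1/2}+|I|^{-1}\Big(\int_I s^{n-1}|V(s)|^2ds\Big)^{1/2}\Big],$$ with a constant $C$ independent of $I$ and $V$.
   Context: $|I|$ denotes the length of $I$. *)

theory Defs
  imports "HOL-Analysis.Analysis"
begin

text \<open>One-dimensional Sobolev space H^1(I), in its continuous representative:
  V is continuous on I, g is a weak derivative of V on I (V y - V x is the integral of g
  over [x,y] for x \<le> y in I), and V, g are in L^2(I).  (For a bounded interval this is
  exactly H^1(I), every element having such a continuous representative.)\<close>
definition H1_with_deriv :: "(real \<Rightarrow> real) \<Rightarrow> (real \<Rightarrow> real) \<Rightarrow> real set \<Rightarrow> bool" where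
  "H1_with_deriv V g I \<longleftrightarrow>
     continuous_on I V \<and>
     V absolutely_integrable_on I \<and> (\<lambda>s. (V s)^2) integrable_on I \<and>
     g absolutely_integrable_on I \<and> (\<lambda>s. (g s)^2) integrable_on I \<and>
     (\<forall>x\<in>I. \<forall>y\<in>I. x \<le> y \<longrightarrow> V y - V x = integral {x..y} g)"

definition ilength :: "real set \<Rightarrow> real" where
  "ilength I = Sup I - Inf I"

end

theory Submission
  imports Defs
begin

text \<open>Write L = |I| and e = n/2 - 1. The third quarter of I has length L/4 and lies to the
  right of the midpoint, so its points t satisfy t >= L/2 and s <= 2t for every s in I.
  Choosing t there to minimise t^(n-1) V(t)^2 gives t^e |V(t)| <= 3/L (int s^(n-1) V^2)^(1/2).
  For p <= q in I, the weighted Cauchy-Schwarz inequality gives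
  int_p^q |V'| <= (int r^(n-1) V'^2)^(1/2) (int_p^q r^(1-n))^(1/2), and
  int_p^q r^(1-n) <= p^(2-n) precisely because n >= 3; this bounds p^e |V(q) - V(p)|.\<close>

lemma powr_half_minus_one_squared:
  fixes p :: real
  assumes "0 < p" "2 \<le> n"
  shows "(p powr (real n / 2 - 1))^2 = p ^ (n - 2)"
proof -
  have "(p powr (real n / 2 - 1))^2 = p powr real (n - 2)"
    using assms by (simp add: powr_power algebra_simps)
  also have "\<dots> = p ^ (n - 2)" by (rule powr_realpow[OF assms(1)])
  finally show ?thesis .
qed

lemma two_mult_abs_le_weighted_square:
  fixes u l x :: real
  assumes "0 < u" "0 < l"
  shows "2 * \<bar>x\<bar> \<le> l * (u * x^2) + (1 / u) / l"
proof -
  have "l * (u * x^2) + (1 / u) / l - 2 * \<bar>x\<bar> = (l * u * \<bar>x\<bar> - 1)^2 / (l * u)"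
    using assms by (simp add: field_simps power2_eq_square)
  also have "\<dots> \<ge> 0" using assms by simp
  finally show ?thesis by simp
qed

lemma le_sqrt_mult_if_forall_pos:
  fixes x a b :: real
  assumes "0 \<le> a" "0 \<le> b" and bound: "\<And>l. 0 < l \<Longrightarrow> 2 * x \<le> l * a + b / l"
  shows "x \<le> sqrt (a * b)"
proof (cases "a = 0 \<or> b = 0")
  case True
  have "x \<le> 0 + \<epsilon>" if "0 < \<epsilon>" for \<epsilon>
  proof (cases "a = 0")
    case True
    have "b / ((b + 1) / \<epsilon>) \<le> \<epsilon>"
      using \<open>0 \<le> b\<close> \<open>0 < \<epsilon>\<close> by (simp add: field_simps)
    then show ?thesis
      using bound[of "(b + 1) / \<epsilon>"] True \<open>0 \<le> b\<close> \<open>0 < \<epsilon>\<close> by simp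
  next
    case False
    then have "b = 0" using \<open>a = 0 \<or> b = 0\<close> by blast
    have "\<epsilon> / (a + 1) * a \<le> \<epsilon>"
      using \<open>0 \<le> a\<close> \<open>0 < \<epsilon>\<close> by (simp add: field_simps)
    then show ?thesis
      using bound[of "\<epsilon> / (a + 1)"] \<open>b = 0\<close> \<open>0 \<le> a\<close> \<open>0 < \<epsilon>\<close> by simp
  qed
  then have "x \<le> 0" by (rule field_le_epsilon)
  then show ?thesis using True by auto
next
  case False
  then have "0 < a" "0 < b" using assms by auto
  define l where "l = sqrt b / sqrt a"
  have "l * a = sqrt (a * b)" "b / l = sqrt (a * b)"
    using \<open>0 < a\<close> \<open>0 < b\<close> unfolding l_def real_sqrt_mult by (simp_all add: field_simps)
  then show ?thesis using bound[of l] \<open>0 < a\<close> \<open>0 < b\<close> unfolding l_def by simp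
qed

lemma inverse_power_has_integral:
  fixes p q :: real
  assumes "0 < p" "p \<le> q" "0 < k"
  shows "((\<lambda>r. 1 / r ^ Suc k) has_integral 1 / (k * p ^ k) - 1 / (k * q ^ k)) {p..q}"
proof -
  have "((\<lambda>r. - 1 / (k * r ^ k)) has_vector_derivative 1 / r ^ Suc k) (at r within {p..q})"
    if "r \<in> {p..q}" for r
  proof -
    have "r > 0" using that assms by auto
    obtain j where "k = Suc j" using \<open>0 < k\<close> gr0_implies_Suc by blast
    show ?thesis
      unfolding has_real_derivative_iff_has_vector_derivative[symmetric]
      by (rule derivative_eq_intros refl)+
         (use \<open>r > 0\<close> \<open>k = Suc j\<close> in \<open>auto simp: field_simps add_nonneg_eq_0_iff\<close>)
  qed
  then have "((\<lambda>r. 1 / r ^ Suc k) has_integral - 1 / (k * q ^ k) - - 1 / (k * p ^ k)) {p..q}"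
    by (intro fundamental_theorem_of_calculus assms)
  then show ?thesis by simp
qed

lemma exists_mult_le_integral:
  fixes f :: "real \<Rightarrow> real"
  assumes "continuous_on {a..b} f" "a \<le> b"
  shows "\<exists>t\<in>{a..b}. (b - a) * f t \<le> integral {a..b} f"
proof -
  obtain t where t: "t \<in> {a..b}" "\<And>x. x \<in> {a..b} \<Longrightarrow> f t \<le> f x"
    using continuous_attains_inf[OF compact_Icc _ assms(1)] assms(2) by auto
  have "(b - a) * f t = integral {a..b} (\<lambda>_. f t)" using assms(2) by simp
  also have "\<dots> \<le> integral {a..b} f"
    using t assms(1) by (intro integral_le integrable_continuous_interval) auto
  finally show ?thesis using t(1) by blast
qed

lemma integral_abs_le_weighted_Cauchy_Schwarz:
  fixes g u :: "real \<Rightarrow> real"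
  assumes g: "(\<lambda>r. \<bar>g r\<bar>) integrable_on S"
    and ug: "(\<lambda>r. u r * (g r)^2) integrable_on S"
    and u: "(\<lambda>r. 1 / u r) integrable_on S"
    and pos: "\<And>r. r \<in> S \<Longrightarrow> 0 < u r"
  shows "integral S (\<lambda>r. \<bar>g r\<bar>)
           \<le> sqrt (integral S (\<lambda>r. u r * (g r)^2) * integral S (\<lambda>r. 1 / u r))"
proof (rule le_sqrt_mult_if_forall_pos)
  show "0 \<le> integral S (\<lambda>r. u r * (g r)^2)" "0 \<le> integral S (\<lambda>r. 1 / u r)"
    by (auto intro!: integral_nonneg ug u dest!: pos)
  fix l :: real assume "0 < l"
  have "2 * integral S (\<lambda>r. \<bar>g r\<bar>) = integral S (\<lambda>r. 2 * \<bar>g r\<bar>)"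
    by simp
  also have "\<dots> \<le> integral S (\<lambda>r. l * (u r * (g r)^2) + (1 / u r) / l)"
    using g ug u pos \<open>0 < l\<close>
    by (intro integral_le integrable_add integrable_on_mult_right integrable_on_divide
              two_mult_abs_le_weighted_square) auto
  also have "\<dots> = l * integral S (\<lambda>r. u r * (g r)^2) + integral S (\<lambda>r. 1 / u r) / l"
    unfolding integral_add[OF integrable_on_mult_right[OF ug] integrable_on_divide[OF u]]
    by (simp only: integral_mult_right integral_divide)
  finally show "2 * integral S (\<lambda>r. \<bar>g r\<bar>)
      \<le> l * integral S (\<lambda>r. u r * (g r)^2) + integral S (\<lambda>r. 1 / u r) / l" .
qed

lemma power_mult_square_absolutely_integrable_on:
  fixes h :: "real \<Rightarrow> real"
  assumes "is_interval I" "bounded I" "(\<lambda>s. (h s)^2) integrable_on I"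
  shows "(\<lambda>s. s ^ k * (h s)^2) absolutely_integrable_on I"
proof -
  have I: "I \<in> sets lebesgue"
    using measurable_convex[OF is_interval_convex[OF assms(1)] assms(2)] by (simp add: fmeasurableD)
  have "(\<lambda>s. (h s)^2) absolutely_integrable_on I"
    using assms(3) by (rule nonnegative_absolutely_integrable_1) simp
  moreover obtain M where "\<And>x. x \<in> I \<Longrightarrow> \<bar>x\<bar> \<le> M"
    using assms(2) bounded_real by auto
  then have "bounded ((\<lambda>s::real. s ^ k) ` I)"
    unfolding bounded_real by (auto simp: power_abs intro!: exI[of _ "M ^ k"] power_mono)
  moreover have "(\<lambda>s::real. s ^ k) \<in> borel_measurable (lebesgue_on I)"
    by (intro continuous_imp_measurable_on_sets_lebesgue continuous_intros I)
  ultimately show ?thesis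
    using absolutely_integrable_bounded_measurable_product_real I by blast
qed

lemma greaterThanLessThan_Inf_Sup_subset:
  fixes I :: "real set"
  assumes "is_interval I" "bounded I" "I \<noteq> {}"
  shows "{Inf I<..<Sup I} \<subseteq> I"
proof
  fix x assume x: "x \<in> {Inf I<..<Sup I}"
  obtain y where "y \<in> I" "y < x"
    using x cInf_less_iff[OF assms(3) bounded_imp_bdd_below[OF assms(2)]] by auto
  moreover obtain z where "z \<in> I" "x < z"
    using x less_cSup_iff[OF assms(3) bounded_imp_bdd_above[OF assms(2)]] by auto
  ultimately show "x \<in> I"
    using assms(1) unfolding is_interval_1 by (meson less_imp_le)
qed

lemma H1_weighted_increment_le:
  fixes V g :: "real \<Rightarrow> real"
  assumes n: "3 \<le> n" and I: "is_interval I" "bounded I" "I \<subseteq> {0<..}"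
    and H1: "H1_with_deriv V g I" and xy: "x \<in> I" "y \<in> I" and le: "x \<le> y"
  shows "x powr (real n / 2 - 1) * \<bar>V y - V x\<bar>
           \<le> sqrt (integral I (\<lambda>r. r ^ (n - 1) * (g r)^2))"
proof -
  define P where "P = x powr (real n / 2 - 1)"
  define B where "B = integral I (\<lambda>r. r ^ (n - 1) * (g r)^2)"
  have "0 < x" using xy I(3) by auto
  have sub: "{x..y} \<subseteq> I"
    using I(1) xy unfolding is_interval_1 by (meson atLeastAtMost_iff subsetI)
  have nonneg: "0 \<le> r ^ (n - 1) * (g r)^2" if "r \<in> I" for r
    using that I(3) by (auto intro!: mult_nonneg_nonneg)
  have gI: "g absolutely_integrable_on I" and g2I: "(\<lambda>r. (g r)^2) integrable_on I"
    using H1 unfolding H1_with_deriv_def by auto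
  have wI: "(\<lambda>r. r ^ (n - 1) * (g r)^2) absolutely_integrable_on I"
    using power_mult_square_absolutely_integrable_on[OF I(1,2) g2I] .
  have g: "(\<lambda>r. \<bar>g r\<bar>) integrable_on {x..y}"
    using absolutely_integrable_on_subinterval[OF gI sub] by (simp add: absolutely_integrable_on_def)
  have w: "(\<lambda>r. r ^ (n - 1) * (g r)^2) integrable_on {x..y}"
    using absolutely_integrable_on_subinterval[OF wI sub] by (simp add: absolutely_integrable_on_def)
  have n_Suc: "n - 1 = Suc (n - 2)" using n by simp
  have inv: "((\<lambda>r. 1 / r ^ (n - 1)) has_integral 1 / ((n - 2) * x ^ (n - 2)) - 1 / ((n - 2) * y ^ (n - 2))) {x..y}"
    unfolding n_Suc using inverse_power_has_integral[OF \<open>0 < x\<close> le, of "n - 2"] n by simp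
  have "integral {x..y} (\<lambda>r. 1 / r ^ (n - 1)) \<le> 1 / ((n - 2) * x ^ (n - 2))"
    unfolding integral_unique[OF inv] using \<open>0 < x\<close> le by simp
  also have "\<dots> \<le> 1 / x ^ (n - 2)"
    using \<open>0 < x\<close> n by (simp add: divide_simps)
  finally have inv_le: "integral {x..y} (\<lambda>r. 1 / r ^ (n - 1)) \<le> 1 / x ^ (n - 2)" .
  have "\<bar>V y - V x\<bar> = \<bar>integral {x..y} g\<bar>"
    using H1 xy le unfolding H1_with_deriv_def by simp
  also have "\<dots> \<le> integral {x..y} (\<lambda>r. \<bar>g r\<bar>)"
    using integral_norm_bound_integral[of g "{x..y}" "\<lambda>r. \<bar>g r\<bar>"] g
      absolutely_integrable_on_subinterval[OF gI sub] by (simp add: absolutely_integrable_on_def)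
  also have "\<dots> \<le> sqrt (integral {x..y} (\<lambda>r. r ^ (n - 1) * (g r)^2) * integral {x..y} (\<lambda>r. 1 / r ^ (n - 1)))"
    using g w has_integral_integrable[OF inv] \<open>0 < x\<close>
    by (intro integral_abs_le_weighted_Cauchy_Schwarz) simp_all
  also have "\<dots> \<le> sqrt (B * (1 / x ^ (n - 2)))"
  proof (intro real_sqrt_le_mono mult_mono inv_le)
    show "integral {x..y} (\<lambda>r. r ^ (n - 1) * (g r)^2) \<le> B"
      unfolding B_def using wI nonneg
      by (intro integral_subset_le[OF sub w]) (auto simp: absolutely_integrable_on_def)
    show "0 \<le> B"
      unfolding B_def using wI nonneg by (intro integral_nonneg) (auto simp: absolutely_integrable_on_def)
    show "0 \<le> integral {x..y} (\<lambda>r. 1 / r ^ (n - 1))"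
      using has_integral_integrable[OF inv] \<open>0 < x\<close> by (intro integral_nonneg) auto
  qed
  also have "\<dots> = sqrt B / sqrt (x ^ (n - 2))"
    by (simp add: real_sqrt_mult real_sqrt_divide)
  also have "sqrt (x ^ (n - 2)) = P"
    unfolding P_def using n by (subst powr_half_minus_one_squared[OF \<open>0 < x\<close>, symmetric]) simp_all
  finally show ?thesis
    using \<open>0 < x\<close> unfolding P_def B_def by (simp add: field_simps)
qed

text \<open>The hypothesis \<open>I \<noteq> {}\<close> is not implied by \<open>Inf I < Sup I\<close>: on \<open>real\<close>,
  \<open>Inf {}\<close> and \<open>Sup {}\<close> are unspecified.\<close>

lemma exists_point_weighted_value_le:
  fixes V :: "real \<Rightarrow> real"
  assumes n: "2 \<le> n" and I: "is_interval I" "bounded I" "I \<noteq> {}" "I \<subseteq> {0<..}" "Inf I < Sup I"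
    and V: "continuous_on I V" "(\<lambda>s. (V s)^2) integrable_on I"
  shows "\<exists>t\<in>I. Sup I \<le> 2 * t \<and>
           t powr (real n / 2 - 1) * \<bar>V t\<bar>
             \<le> 3 * sqrt (integral I (\<lambda>r. r ^ (n - 1) * (V r)^2)) / ilength I"
proof -
  define f where "f = (\<lambda>r. r ^ (n - 1) * (V r)^2)"
  define A where "A = integral I f"
  define L where "L = ilength I"
  define m where "m = (Inf I + Sup I) / 2"
  define c where "c = (Inf I + 3 * Sup I) / 4"
  have "0 \<le> Inf I"
    using I(3,4) by (intro cInf_greatest) auto
  have "0 < L" "c - m = L / 4"
    using I(5) unfolding L_def ilength_def c_def m_def by (simp_all add: field_simps)
  have sub: "{m..c} \<subseteq> I"
    using greaterThanLessThan_Inf_Sup_subset[OF I(1-3)] I(5) unfolding m_def c_def by auto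
  have "continuous_on {m..c} f"
    unfolding f_def using continuous_on_subset[OF V(1) sub] by (intro continuous_intros)
  moreover have "m \<le> c"
    using \<open>c - m = L / 4\<close> \<open>0 < L\<close> by simp
  ultimately obtain t where t: "t \<in> {m..c}" "(c - m) * f t \<le> integral {m..c} f"
    using exists_mult_le_integral by blast
  have fI: "f absolutely_integrable_on I"
    unfolding f_def by (rule power_mult_square_absolutely_integrable_on[OF I(1,2) V(2)])
  have "integral {m..c} f \<le> A"
    unfolding A_def using fI sub I(4) \<open>continuous_on {m..c} f\<close>
    by (intro integral_subset_le integrable_continuous_interval)
       (auto simp: absolutely_integrable_on_def f_def intro!: mult_nonneg_nonneg)
  have "t \<in> I"
    using t(1) sub by blast
  then have "0 < t"
    using I(4) by blast
  have "L / 2 \<le> t" "Sup I \<le> 2 * t"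
    using t(1) \<open>0 \<le> Inf I\<close> unfolding m_def L_def ilength_def by simp_all
  define W where "W = t powr (real n / 2 - 1) * \<bar>V t\<bar>"
  have "W^2 = t ^ (n - 2) * (V t)^2"
    unfolding W_def power_mult_distrib powr_half_minus_one_squared[OF \<open>0 < t\<close> n] by simp
  moreover have "n - 1 = Suc (n - 2)"
    using n by simp
  then have "t ^ (n - 1) = t * t ^ (n - 2)"
    by simp
  ultimately have "f t = t * W^2"
    unfolding f_def by simp
  have "L / 4 * (L / 2) * W^2 \<le> L / 4 * t * W^2"
    using \<open>L / 2 \<le> t\<close> \<open>0 < L\<close> by (intro mult_right_mono mult_left_mono) auto
  also have "\<dots> = (c - m) * f t"
    unfolding \<open>f t = t * W^2\<close> \<open>c - m = L / 4\<close> by simp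
  also have "\<dots> \<le> A"
    using t(2) \<open>integral {m..c} f \<le> A\<close> by linarith
  finally have "(L * W)^2 \<le> 8 * A"
    by (simp add: power2_eq_square algebra_simps)
  then have "0 \<le> A"
    using zero_le_power2[of "L * W"] by linarith
  with \<open>(L * W)^2 \<le> 8 * A\<close> have "(L * W)^2 \<le> (3 * sqrt A)^2"
    by (simp add: power_mult_distrib)
  then have "L * W \<le> 3 * sqrt A"
    by (rule power2_le_imp_le) (simp add: \<open>0 \<le> A\<close>)
  then have "W \<le> 3 * sqrt A / L"
    using \<open>0 < L\<close> by (simp add: field_simps)
  then show ?thesis
    using \<open>t \<in> I\<close> \<open>Sup I \<le> 2 * t\<close> unfolding W_def A_def L_def f_def by blast
qed

lemma H1_weighted_pointwise_bound:
  fixes V g :: "real \<Rightarrow> real"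
  assumes n: "3 \<le> n" and I: "is_interval I" "bounded I" "I \<subseteq> {0<..}" "Inf I < Sup I"
    and H1: "H1_with_deriv V g I" and s: "s \<in> I"
  shows "s powr (real n / 2 - 1) * \<bar>V s\<bar>
           \<le> 3 * 2 powr (real n / 2 - 1) * (sqrt (integral I (\<lambda>r. r ^ (n - 1) * (g r)^2))
                + (1 / ilength I) * sqrt (integral I (\<lambda>r. r ^ (n - 1) * (V r)^2)))"
proof -
  define e where "e = real n / 2 - 1"
  define A where "A = sqrt (integral I (\<lambda>r. r ^ (n - 1) * (V r)^2))"
  define B where "B = sqrt (integral I (\<lambda>r. r ^ (n - 1) * (g r)^2))"
  have "0 \<le> e" using n unfolding e_def by simp
  have "0 < s" using s I(3) by auto
  have V: "continuous_on I V" "(\<lambda>r. (V r)^2) integrable_on I"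
    using H1 unfolding H1_with_deriv_def by auto
  have "2 \<le> n" "I \<noteq> {}"
    using n s by auto
  then obtain t where t: "t \<in> I" "Sup I \<le> 2 * t" "t powr e * \<bar>V t\<bar> \<le> 3 * A / ilength I"
    using exists_point_weighted_value_le[OF _ I(1,2) _ I(3,4) V] unfolding e_def A_def by blast
  define p where "p = min s t"
  define q where "q = max s t"
  have "p \<in> I" "q \<in> I" "p \<le> q" "\<bar>V s - V t\<bar> = \<bar>V q - V p\<bar>"
    using s t(1) unfolding p_def q_def by (auto simp: min_def max_def abs_minus_commute)
  then have osc: "p powr e * \<bar>V s - V t\<bar> \<le> B"
    using H1_weighted_increment_le[OF n I(1-3) H1] unfolding e_def B_def by simp
  have "s \<le> Sup I"
    using s I(2) by (simp add: cSup_upper bounded_imp_bdd_above)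
  then have "s \<le> 2 * t" "s \<le> 2 * p"
    using t(2) \<open>0 < s\<close> unfolding p_def by auto
  then have "s powr e \<le> 2 powr e * t powr e" "s powr e \<le> 2 powr e * p powr e"
    using \<open>0 < s\<close> \<open>0 \<le> e\<close> by (auto simp flip: powr_mult intro: powr_mono2)
  have "s powr e * \<bar>V s\<bar> \<le> s powr e * \<bar>V t\<bar> + s powr e * \<bar>V s - V t\<bar>"
    by (simp flip: distrib_left add: mult_left_mono abs_triangle_ineq2)
  also have "\<dots> \<le> 2 powr e * (t powr e * \<bar>V t\<bar>) + 2 powr e * (p powr e * \<bar>V s - V t\<bar>)"
    using \<open>s powr e \<le> 2 powr e * t powr e\<close> \<open>s powr e \<le> 2 powr e * p powr e\<close>
    by (intro add_mono; simp add: mult.assoc[symmetric] mult_right_mono)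
  also have "\<dots> \<le> 2 powr e * (3 * A / ilength I) + 2 powr e * B"
    using t(3) osc by (intro add_mono mult_left_mono) auto
  also have "\<dots> \<le> 3 * 2 powr e * (B + (1 / ilength I) * A)"
    using order_trans[OF _ osc] by (simp add: algebra_simps)
  finally show ?thesis unfolding e_def A_def B_def .
qed

theorem lemma3p6:
  fixes n :: nat
  assumes "n \<ge> 3"
  shows "\<exists>C. \<forall>(I :: real set) V g.
           is_interval I \<and> bounded I \<and> I \<subseteq> {0<..} \<and> Inf I < Sup I \<and>
           H1_with_deriv V g I \<longrightarrow>
           (\<forall>s\<in>I. s powr (real n / 2 - 1) * \<bar>V s\<bar> \<le>
              C * (sqrt (integral I (\<lambda>s. s ^ (n - 1) * (g s)^2))
                   + (1 / ilength I) * sqrt (integral I (\<lambda>s. s ^ (n - 1) * (V s)^2))))"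
  using H1_weighted_pointwise_bound[OF assms] by blast

end
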